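(* As formal power series in $q$, $$\sum_{n=0}^\infty \overline{bt}(2n)q^n=8q\frac{f_2^7f_4^3f_8^2}{f_1^{18}}+\frac{f_2^{17}f_4}{f_1^{22}f_8^2}.$$
   Context: For a positive integer $k$ let $f_k:=\prod_{m=1}^\infty(1-q^{mk})$. The function $\overline{bt}(n)$ is defined by $\sum_{n\ge0}\overline{bt}(n)q^n=\frac{f_4^3}{f_1^6f_2^3}$. *)

theory Defs
  imports "HOL-Computational_Algebra.Formal_Power_Series"
begin

text \<open>f_k = prod_{m>=1} (1 - q^(m k)) as a formal power series over the rationals.
  For k >= 1 the n-th coefficient of the infinite product equals the n-th coefficient
  of the finite product over m = 1..n (factors with m > n are 1 modulo q^(n+1)).\<close>
definition fk :: "nat \<Rightarrow> rat fps" where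
  "fk k = Abs_fps (\<lambda>n. fps_nth (\<Prod>m\<in>{1..n}. (1 - fps_X ^ (m * k))) n)"

definition btbar_gf :: "rat fps" where
  "btbar_gf = fk 4 ^ 3 / (fk 1 ^ 6 * fk 2 ^ 3)"

definition btbar :: "nat \<Rightarrow> rat" where
  "btbar n = fps_nth btbar_gf n"

end

(*
  Write phi(q) = sum_{j in Z} q^(j^2) and psi(q) = sum_{j >= 0} q^(j(j+1)/2).  Letting n tend to
  infinity in the finite Jacobi triple product, a q-binomial identity, gives the product formulas
  phi(q) = f_2^5 / (f_1^2 f_4^2) and psi(q) = f_2^2 / f_1.  Hence the generating function of bt is
  phi(q)^3 f_4^9 / f_2^18, whose second factor is a series in q^2, and sum bt(2n) q^n is f_2^9 / f_1^18
  times the even part E of phi(q)^3 (with q^2 replaced by q).  The 2-dissection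
  phi(q) = phi(q^4) + 2q psi(q^8) gives E = phi(q^2)^3 + 12q phi(q^2) psi(q^4)^2, and
  phi(q^2)^2 + 4q psi(q^4)^2 = phi(q)^2 follows from phi(q) phi(-q) = phi(-q^2)^2.  Substituting the
  product formulas yields the two terms.
*)

theory Submission
  imports Defs
begin

unbundle fps_syntax

section \<open>Truncation, dilation and sign change\<close>

definition fps_eq_below :: "nat \<Rightarrow> 'a fps \<Rightarrow> 'a fps \<Rightarrow> bool" where
  "fps_eq_below N f g \<longleftrightarrow> (\<forall>k<N. f $ k = g $ k)"

lemma fps_eq_below_refl [simp]: "fps_eq_below N f f"
  by (simp add: fps_eq_below_def)

lemma fps_eq_below_sym: "fps_eq_below N f g \<Longrightarrow> fps_eq_below N g f"
  by (simp add: fps_eq_below_def)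

lemma fps_eq_below_trans:
  "fps_eq_below N f g \<Longrightarrow> fps_eq_below N g h \<Longrightarrow> fps_eq_below N f h"
  by (simp add: fps_eq_below_def)

lemma fps_eq_below_mono: "fps_eq_below N f g \<Longrightarrow> M \<le> N \<Longrightarrow> fps_eq_below M f g"
  by (simp add: fps_eq_below_def)

lemma fps_eq_below_mult:
  fixes f g f' g' :: "'a::comm_semiring_1 fps"
  assumes "fps_eq_below N f g" "fps_eq_below N f' g'"
  shows "fps_eq_below N (f * f') (g * g')"
  using assms unfolding fps_eq_below_def fps_mult_nth by (auto intro!: sum.cong)

lemma fps_eq_below_mult_1:
  "fps_eq_below N f 1 \<Longrightarrow> fps_eq_below N g 1 \<Longrightarrow> fps_eq_below N (f * g) (1 :: 'a::comm_semiring_1 fps)"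
  using fps_eq_below_mult[of N f 1 g 1] by simp

lemma fps_eq_below_1_minus_X_power:
  "m \<le> e \<Longrightarrow> fps_eq_below m (1 - fps_X ^ e :: 'a::comm_ring_1 fps) 1"
  by (auto simp: fps_eq_below_def)

lemma fps_eq_below_1_plus_X_power:
  "m \<le> e \<Longrightarrow> fps_eq_below m (1 + fps_X ^ e :: 'a::comm_ring_1 fps) 1"
  by (auto simp: fps_eq_below_def)

lemma fps_eq_below_cancel_unit:
  fixes u f g :: "'a::field fps"
  assumes "u $ 0 \<noteq> 0" and "fps_eq_below N (u * f) (u * g)"
  shows "fps_eq_below N f g"
proof -
  have "fps_eq_below N (inverse u * (u * f)) (inverse u * (u * g))"
    using fps_eq_below_mult[OF fps_eq_below_refl assms(2)] .
  then show ?thesis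
    using assms(1) by (simp add: mult.assoc[symmetric] inverse_mult_eq_1)
qed

lemma fps_eqI_below: "(\<And>N. fps_eq_below (Suc N) f g) \<Longrightarrow> f = g"
  by (rule fps_ext) (auto simp: fps_eq_below_def)

definition fps_dilate :: "nat \<Rightarrow> 'a::comm_ring_1 fps \<Rightarrow> 'a fps" where
  "fps_dilate d f = f oo fps_X ^ d"

lemma fps_dilate_nth: "fps_dilate d f $ n = (if d dvd n then f $ (n div d) else 0)"
proof -
  have "fps_dilate d f $ n = (\<Sum>i\<in>{0..n}. if i = n div d \<and> d dvd n then f $ i else 0)"
    unfolding fps_dilate_def fps_compose_nth power_mult[symmetric]
    by (intro sum.cong) auto
  also have "\<dots> = (if d dvd n then f $ (n div d) else 0)"
    by (cases "d dvd n") (auto simp: sum.delta' div_le_dividend)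
  finally show ?thesis .
qed

lemma fps_dilate_add: "fps_dilate d (f + g) = fps_dilate d f + fps_dilate d g"
  unfolding fps_dilate_def by (rule fps_compose_add_distrib)

lemma fps_dilate_diff: "fps_dilate d (f - g) = fps_dilate d f - fps_dilate d g"
  unfolding fps_dilate_def by (rule fps_compose_sub_distrib)

lemma fps_dilate_1 [simp]: "fps_dilate d 1 = 1"
  by (simp add: fps_dilate_def)

lemma fps_dilate_numeral [simp]: "fps_dilate d (numeral c) = numeral c"
  by (rule fps_ext) (auto simp: fps_dilate_nth numeral_fps_const)

context
  fixes d :: nat
  assumes d: "0 < d"
begin

lemma fps_dilate_X: "fps_dilate d fps_X = fps_X ^ d"
  using d by (simp add: fps_dilate_def)

lemma fps_dilate_mult:
  "fps_dilate d (f * g :: 'a::idom fps) = fps_dilate d f * fps_dilate d g"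
  unfolding fps_dilate_def by (rule fps_compose_mult_distrib) (use d in simp)

lemma fps_dilate_power: "fps_dilate d (f ^ n :: 'a::idom fps) = fps_dilate d f ^ n"
  by (induction n) (simp_all add: fps_dilate_mult)

lemma fps_dilate_prod: "fps_dilate d (\<Prod>i\<in>S. f i :: 'a::idom fps) = (\<Prod>i\<in>S. fps_dilate d (f i))"
  by (induction S rule: infinite_finite_induct) (simp_all add: fps_dilate_mult)

lemma fps_dilate_inject: "fps_dilate d f = fps_dilate d g \<Longrightarrow> f = g"
proof (rule fps_ext)
  fix n assume "fps_dilate d f = fps_dilate d g"
  then have "fps_dilate d f $ (d * n) = fps_dilate d g $ (d * n)" by simp
  then show "f $ n = g $ n" using d by (simp add: fps_dilate_nth)
qed

lemma fps_eq_below_dilate: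
  assumes "fps_eq_below N f g"
  shows "fps_eq_below N (fps_dilate d f) (fps_dilate d g)"
proof -
  have "k div d < N" if "k < N" for k
    using that d by (meson div_le_dividend le_less_trans)
  then show ?thesis using assms by (simp add: fps_eq_below_def fps_dilate_nth)
qed

end

lemma fps_dilate_dilate:
  assumes "0 < a" "0 < b"
  shows "fps_dilate a (fps_dilate b f) = fps_dilate (a * b) f"
proof (rule fps_ext)
  fix n
  show "fps_dilate a (fps_dilate b f) $ n = fps_dilate (a * b) f $ n"
    using assms by (auto simp: fps_dilate_nth mult.commute div_mult2_eq
                        intro: dvd_mult2 dvd_mult_left)
qed

definition fps_neg_var :: "'a::comm_ring_1 fps \<Rightarrow> 'a fps" where
  "fps_neg_var f = f oo - fps_X"

lemma fps_neg_var_nth: "fps_neg_var f $ n = (- 1) ^ n * f $ n"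
  by (simp add: fps_neg_var_def fps_compose_uminus')

lemma fps_neg_var_add: "fps_neg_var (f + g) = fps_neg_var f + fps_neg_var g"
  by (rule fps_ext) (simp add: fps_neg_var_nth algebra_simps)

lemma fps_neg_var_diff: "fps_neg_var (f - g) = fps_neg_var f - fps_neg_var g"
  by (rule fps_ext) (simp add: fps_neg_var_nth algebra_simps)

lemma fps_neg_var_1 [simp]: "fps_neg_var 1 = 1"
  by (simp add: fps_neg_var_def)

lemma fps_neg_var_X [simp]: "fps_neg_var fps_X = - fps_X"
  by (simp add: fps_neg_var_def)

lemma fps_neg_var_mult:
  "fps_neg_var (f * g :: 'a::idom fps) = fps_neg_var f * fps_neg_var g"
  unfolding fps_neg_var_def by (rule fps_compose_mult_distrib) simp

lemma fps_neg_var_power: "fps_neg_var (f ^ n :: 'a::idom fps) = fps_neg_var f ^ n"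
  by (induction n) (simp_all add: fps_neg_var_mult)

lemma fps_neg_var_prod: "fps_neg_var (\<Prod>i\<in>S. f i :: 'a::idom fps) = (\<Prod>i\<in>S. fps_neg_var (f i))"
  by (induction S rule: infinite_finite_induct) (simp_all add: fps_neg_var_mult)

lemma fps_neg_var_neg_var [simp]: "fps_neg_var (fps_neg_var f) = f"
  by (rule fps_ext) (simp add: fps_neg_var_nth flip: mult.assoc power_mult_distrib)

lemma fps_neg_var_dilate_even: "even d \<Longrightarrow> fps_neg_var (fps_dilate d f) = fps_dilate d f"
  by (rule fps_ext) (auto simp: fps_neg_var_nth fps_dilate_nth dest: dvd_trans)

lemma fps_eq_below_neg_var:
  "fps_eq_below N f g \<Longrightarrow> fps_eq_below N (fps_neg_var f) (fps_neg_var g)"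
  by (simp add: fps_eq_below_def fps_neg_var_nth)

definition fps_even_part :: "'a fps \<Rightarrow> 'a fps" where
  "fps_even_part f = Abs_fps (\<lambda>n. f $ (2 * n))"

definition fps_odd_part :: "'a fps \<Rightarrow> 'a fps" where
  "fps_odd_part f = Abs_fps (\<lambda>n. f $ (2 * n + 1))"

lemma fps_even_odd_decomp:
  "f = fps_dilate 2 (fps_even_part f) + fps_X * fps_dilate 2 (fps_odd_part f)"
proof (rule fps_ext)
  fix n
  show "f $ n = (fps_dilate 2 (fps_even_part f) + fps_X * fps_dilate 2 (fps_odd_part f)) $ n"
    by (cases n) (auto simp: fps_dilate_nth fps_even_part_def fps_odd_part_def elim!: oddE)
qed

lemma fps_even_part_decomp: "fps_even_part (fps_dilate 2 f + fps_X * fps_dilate 2 g) = f"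
proof (rule fps_ext)
  fix n
  show "fps_even_part (fps_dilate 2 f + fps_X * fps_dilate 2 g) $ n = f $ n"
    by (cases n) (simp_all add: fps_even_part_def fps_dilate_nth)
qed

lemma fps_even_part_dilate_mult:
  "fps_even_part (fps_dilate 2 f * g :: 'a::idom fps) = f * fps_even_part g"
proof -
  have "fps_dilate 2 f * g =
      fps_dilate 2 (f * fps_even_part g) + fps_X * fps_dilate 2 (f * fps_odd_part g)"
    by (subst fps_even_odd_decomp[of g]) (simp add: fps_dilate_mult algebra_simps)
  then show ?thesis by (simp add: fps_even_part_decomp)
qed

section \<open>Infinite products\<close>

definition fps_prod_inf :: "(nat \<Rightarrow> 'a::comm_ring_1 fps) \<Rightarrow> 'a fps" where
  "fps_prod_inf F = Abs_fps (\<lambda>n. (\<Prod>m\<in>{1..n}. F m) $ n)"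

lemma fps_prod_inf_eq_below:
  assumes F: "\<And>m. fps_eq_below m (F m) 1"
  shows "fps_eq_below (Suc M) (fps_prod_inf F) (\<Prod>m\<in>{1..M}. F m)"
proof -
  have step: "fps_eq_below (Suc M) (\<Prod>m\<in>{1..M}. F m) (\<Prod>m\<in>{1..Suc M}. F m)" for M
  proof -
    have "fps_eq_below (Suc M) ((\<Prod>m\<in>{1..M}. F m) * 1) ((\<Prod>m\<in>{1..M}. F m) * F (Suc M))"
      by (intro fps_eq_below_mult fps_eq_below_refl fps_eq_below_sym[OF F])
    then show ?thesis by (simp add: prod.nat_ivl_Suc')
  qed
  have "(\<Prod>m\<in>{1..M}. F m) $ k = (\<Prod>m\<in>{1..k}. F m) $ k" if "k \<le> M" for k
    using that
  proof (induction M)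
    case (Suc M)
    then show ?case
      using step[of M] by (cases "k = Suc M") (auto simp: fps_eq_below_def)
  qed simp
  then show ?thesis by (simp add: fps_eq_below_def fps_prod_inf_def)
qed

lemma fps_prod_inf_eqI:
  assumes "\<And>m. fps_eq_below m (F m) 1"
    and "\<And>M. fps_eq_below (Suc M) P (\<Prod>m\<in>{1..M}. F m)"
  shows "P = fps_prod_inf F"
proof (rule fps_eqI_below)
  fix M
  show "fps_eq_below (Suc M) P (fps_prod_inf F)"
    using assms(2)[of M] fps_prod_inf_eq_below[OF assms(1), of M]
    by (metis fps_eq_below_sym fps_eq_below_trans)
qed

lemma fps_prod_inf_cong:
  assumes "\<And>m. 1 \<le> m \<Longrightarrow> F m = G m"
  shows "fps_prod_inf F = fps_prod_inf G"
proof -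
  have "(\<Prod>m\<in>{1..n}. F m) = (\<Prod>m\<in>{1..n}. G m)" for n
    using assms by (intro prod.cong) simp_all
  then show ?thesis by (simp add: fps_prod_inf_def)
qed

lemma fps_prod_inf_mult:
  assumes F: "\<And>m. fps_eq_below m (F m) 1" and G: "\<And>m. fps_eq_below m (G m) 1"
  shows "fps_prod_inf F * fps_prod_inf G = fps_prod_inf (\<lambda>m. F m * G m)"
proof (rule fps_prod_inf_eqI)
  show "fps_eq_below m (F m * G m) 1" for m
    by (intro fps_eq_below_mult_1 F G)
  show "fps_eq_below (Suc M) (fps_prod_inf F * fps_prod_inf G) (\<Prod>m\<in>{1..M}. F m * G m)" for M
    unfolding prod.distrib by (intro fps_eq_below_mult fps_prod_inf_eq_below F G)
qed

lemma fps_prod_inf_dilate: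
  fixes F :: "nat \<Rightarrow> 'a::idom fps"
  assumes "0 < d" and F: "\<And>m. fps_eq_below m (F m) 1"
  shows "fps_dilate d (fps_prod_inf F) = fps_prod_inf (\<lambda>m. fps_dilate d (F m))"
proof (rule fps_prod_inf_eqI)
  show "fps_eq_below m (fps_dilate d (F m)) 1" for m
    using fps_eq_below_dilate[OF \<open>0 < d\<close> F] by simp
  show "fps_eq_below (Suc M) (fps_dilate d (fps_prod_inf F)) (\<Prod>m\<in>{1..M}. fps_dilate d (F m))" for M
    unfolding fps_dilate_prod[OF \<open>0 < d\<close>, symmetric]
    by (intro fps_eq_below_dilate[OF \<open>0 < d\<close>] fps_prod_inf_eq_below F)
qed

lemma fps_prod_inf_neg_var:
  fixes F :: "nat \<Rightarrow> 'a::idom fps"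
  assumes F: "\<And>m. fps_eq_below m (F m) 1"
  shows "fps_neg_var (fps_prod_inf F) = fps_prod_inf (\<lambda>m. fps_neg_var (F m))"
proof (rule fps_prod_inf_eqI)
  show "fps_eq_below m (fps_neg_var (F m)) 1" for m
    using fps_eq_below_neg_var[OF F] by simp
  show "fps_eq_below (Suc M) (fps_neg_var (fps_prod_inf F)) (\<Prod>m\<in>{1..M}. fps_neg_var (F m))" for M
    unfolding fps_neg_var_prod[symmetric] by (intro fps_eq_below_neg_var fps_prod_inf_eq_below F)
qed

lemma prod_atLeast1_Suc: "(\<Prod>k\<in>{1..Suc n}. f k) = (\<Prod>k\<in>{1..n}. f k) * f (Suc n)"
  by (simp add: prod.nat_ivl_Suc' mult.commute)

lemma fps_prod_inf_pairs:
  assumes F: "\<And>m. fps_eq_below m (F m) 1"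
  shows "fps_prod_inf (\<lambda>m. F (2 * m - 1) * F (2 * m)) = fps_prod_inf F"
proof (rule sym, rule fps_prod_inf_eqI)
  show "fps_eq_below m (F (2 * m - 1) * F (2 * m)) 1" for m
    by (intro fps_eq_below_mult_1 fps_eq_below_mono[OF F]) arith+
  fix M
  have "(\<Prod>m\<in>{1..M}. F (2 * m - 1) * F (2 * m)) = (\<Prod>k\<in>{1..2 * M}. F k)"
    by (induction M) (simp_all add: prod_atLeast1_Suc mult_ac)
  then show "fps_eq_below (Suc M) (fps_prod_inf F) (\<Prod>m\<in>{1..M}. F (2 * m - 1) * F (2 * m))"
    using fps_eq_below_mono[OF fps_prod_inf_eq_below[OF F, of "2 * M"]] by simp
qed

lemma fk_conv_fps_prod_inf: "fk k = fps_prod_inf (\<lambda>m. 1 - fps_X ^ (m * k))"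
  unfolding fk_def fps_prod_inf_def ..

lemma fk_nth_0 [simp]: "fk k $ 0 = 1"
  by (simp add: fk_def)

lemma fk_nonzero [simp]: "fk k \<noteq> 0"
  using fk_nth_0[of k] by (metis fps_zero_nth zero_neq_one)

lemma fps_dilate_fk:
  assumes "0 < d" "0 < k"
  shows "fps_dilate d (fk k) = fk (d * k)"
proof -
  have "fps_dilate d (fk k) = fps_prod_inf (\<lambda>m. fps_dilate d (1 - fps_X ^ (m * k)))"
    unfolding fk_conv_fps_prod_inf
    using assms by (intro fps_prod_inf_dilate fps_eq_below_1_minus_X_power) simp_all
  also have "\<dots> = fk (d * k)"
    unfolding fk_conv_fps_prod_inf using assms
    by (simp add: fps_dilate_diff fps_dilate_power fps_dilate_X power_mult[symmetric] mult_ac)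
  finally show ?thesis .
qed

definition qpoch :: "'a::comm_ring_1 \<Rightarrow> nat \<Rightarrow> 'a" where
  "qpoch p n = (\<Prod>k\<in>{1..n}. (1 - p ^ k))"

lemma qpoch_Suc: "qpoch p (Suc n) = qpoch p n * (1 - p ^ Suc n)"
  by (simp add: qpoch_def prod.nat_ivl_Suc')

lemma fk_eq_below_qpoch:
  assumes "0 < k"
  shows "fps_eq_below (Suc M) (fk k) (qpoch (fps_X ^ k) M)"
proof -
  have "fps_eq_below m (1 - fps_X ^ (m * k)) (1 :: rat fps)" for m
    using assms by (intro fps_eq_below_1_minus_X_power) simp
  then have "fps_eq_below (Suc M) (fk k) (\<Prod>m\<in>{1..M}. 1 - fps_X ^ (m * k))"
    unfolding fk_conv_fps_prod_inf by (rule fps_prod_inf_eq_below)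
  then show ?thesis by (simp add: qpoch_def power_mult[symmetric] mult.commute)
qed

section \<open>Gaussian binomials and the finite Jacobi triple product\<close>

fun qbinomial :: "'a::comm_ring_1 \<Rightarrow> nat \<Rightarrow> nat \<Rightarrow> 'a" where
  "qbinomial p n 0 = 1"
| "qbinomial p 0 (Suc k) = 0"
| "qbinomial p (Suc n) (Suc k) = qbinomial p n k + p ^ Suc k * qbinomial p n (Suc k)"

lemma qbinomial_eq_0: "n < k \<Longrightarrow> qbinomial p n k = 0"
proof (induction n arbitrary: k)
  case 0 then show ?case by (cases k) auto
next
  case (Suc n) then show ?case by (cases k) auto
qed

lemma sum_qbinomial_Suc:
  "(\<Sum>i\<le>Suc m. qbinomial p (Suc m) i * w i) =
     (\<Sum>i\<le>m. qbinomial p m i * w (Suc i)) + (\<Sum>i\<le>m. qbinomial p m i * p ^ i * w i)"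
proof -
  have "(\<Sum>i\<le>Suc m. qbinomial p (Suc m) i * w i) = w 0 + (\<Sum>i\<le>m. qbinomial p m i * w (Suc i))
      + (\<Sum>i\<le>m. p ^ Suc i * qbinomial p m (Suc i) * w (Suc i))"
    by (subst sum.atMost_Suc_shift) (simp add: algebra_simps sum.distrib del: power_Suc)
  moreover have "(\<Sum>i\<le>m. qbinomial p m i * p ^ i * w i) =
      w 0 + (\<Sum>i\<le>m. p ^ Suc i * qbinomial p m (Suc i) * w (Suc i))"
  proof -
    have "(\<Sum>i\<le>m. qbinomial p m i * p ^ i * w i) = (\<Sum>i\<le>Suc m. qbinomial p m i * p ^ i * w i)"
      by (simp add: qbinomial_eq_0)
    also have "\<dots> = w 0 + (\<Sum>i\<le>m. p ^ Suc i * qbinomial p m (Suc i) * w (Suc i))"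
      by (subst sum.atMost_Suc_shift) (simp add: mult_ac del: power_Suc)
    finally show ?thesis .
  qed
  ultimately show ?thesis by (simp add: add.assoc)
qed

definition tri :: "int \<Rightarrow> nat" where
  "tri j = nat (j * (j + 1) div 2)"

lemma mult_succ_nonneg: "0 \<le> x * (x + 1 :: int)"
  by (cases "x \<ge> 0") (simp_all add: mult_nonpos_nonpos)

lemma tri_times_2: "int (tri j) * 2 = j * (j + 1)"
proof -
  have "even (j * (j + 1))" by simp
  with mult_succ_nonneg[of j] show ?thesis unfolding tri_def by (auto elim!: evenE)
qed

lemma tri_plus_1: "int (tri (j + 1)) = int (tri j) + j + 1"
  using tri_times_2[of j] tri_times_2[of "j + 1"] by (simp add: algebra_simps)

lemma tri_Suc: "tri (int (Suc i)) = tri (int i) + Suc i"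
proof -
  have "int (tri (int (Suc i))) = int (tri (int i) + Suc i)"
    using tri_plus_1[of "int i"] by (simp add: add_ac)
  then show ?thesis by (simp only: of_nat_eq_iff)
qed

lemma tri_shift: "i + tri (int i - int (Suc a)) = a + tri (int i - int a)"
  using tri_plus_1[of "int i - int (Suc a)"] by simp

lemma qbinomial_theorem:
  "(\<Prod>k\<in>{1..b}. 1 + z * p ^ k) = (\<Sum>i\<le>b. qbinomial p b i * z ^ i * p ^ tri (int i))"
proof (induction b arbitrary: z)
  case 0 then show ?case by (simp add: tri_def)
next
  case (Suc b)
  have "(\<Prod>k\<in>{1..Suc b}. 1 + z * p ^ k) = (1 + z * p) * (\<Prod>k\<in>{1..b}. 1 + (z * p) * p ^ k)"
    by (simp add: prod.atLeast_Suc_atMost prod.shift_bounds_cl_Suc_ivl mult_ac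
             del: prod.cl_ivl_Suc)
  also have "\<dots> = (1 + z * p) * (\<Sum>i\<le>b. qbinomial p b i * (z * p) ^ i * p ^ tri (int i))"
    by (simp only: Suc.IH)
  also have "\<dots> = (\<Sum>i\<le>b. qbinomial p b i * z ^ Suc i * p ^ tri (int (Suc i))
      + qbinomial p b i * p ^ i * (z ^ i * p ^ tri (int i)))"
    unfolding sum_distrib_left
    by (rule sum.cong) (simp_all add: tri_Suc power_add power_mult_distrib algebra_simps
                            del: of_nat_Suc)
  also have "\<dots> = (\<Sum>i\<le>b. qbinomial p b i * z ^ Suc i * p ^ tri (int (Suc i)))
      + (\<Sum>i\<le>b. qbinomial p b i * p ^ i * (z ^ i * p ^ tri (int i)))"
    by (rule sum.distrib)
  also have "\<dots> = (\<Sum>i\<le>Suc b. qbinomial p (Suc b) i * z ^ i * p ^ tri (int i))"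
    using sum_qbinomial_Suc[of p b "\<lambda>i. z ^ i * p ^ tri (int i)"] by (simp add: mult.assoc)
  finally show ?case .
qed

lemma finite_jacobi_triple_product:
  "(\<Prod>s<a. z + p ^ s) * (\<Prod>k\<in>{1..b}. 1 + z * p ^ k) =
     (\<Sum>i\<le>a + b. qbinomial p (a + b) i * z ^ i * p ^ tri (int i - int a))"
proof (induction a)
  case 0 then show ?case using qbinomial_theorem[where b = b and z = z and p = p] by simp
next
  case (Suc a)
  have "(\<Prod>s<Suc a. z + p ^ s) * (\<Prod>k\<in>{1..b}. 1 + z * p ^ k) =
      (z + p ^ a) * ((\<Prod>s<a. z + p ^ s) * (\<Prod>k\<in>{1..b}. 1 + z * p ^ k))"
    by (simp add: mult_ac)
  also have "\<dots> = (z + p ^ a) * (\<Sum>i\<le>a + b. qbinomial p (a + b) i * z ^ i * p ^ tri (int i - int a))"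
    by (simp only: Suc.IH)
  also have "\<dots> = (\<Sum>i\<le>a + b. qbinomial p (a + b) i * z ^ Suc i * p ^ tri (int (Suc i) - int (Suc a))
      + qbinomial p (a + b) i * p ^ i * (z ^ i * p ^ tri (int i - int (Suc a))))"
    unfolding sum_distrib_left
  proof (rule sum.cong)
    fix i
    let ?c = "qbinomial p (a + b) i"
    have "(z + p ^ a) * (?c * z ^ i * p ^ tri (int i - int a)) =
        ?c * z ^ Suc i * p ^ tri (int i - int a) + ?c * z ^ i * p ^ (a + tri (int i - int a))"
      by (simp add: algebra_simps power_add)
    also have "\<dots> = ?c * z ^ Suc i * p ^ tri (int i - int a) + ?c * z ^ i * p ^ (i + tri (int i - int (Suc a)))"
      by (simp only: tri_shift)
    finally show "(z + p ^ a) * (?c * z ^ i * p ^ tri (int i - int a)) =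
        ?c * z ^ Suc i * p ^ tri (int (Suc i) - int (Suc a)) + ?c * p ^ i * (z ^ i * p ^ tri (int i - int (Suc a)))"
      by (simp add: power_add mult_ac)
  qed simp
  also have "\<dots> = (\<Sum>i\<le>a + b. qbinomial p (a + b) i * z ^ Suc i * p ^ tri (int (Suc i) - int (Suc a)))
      + (\<Sum>i\<le>a + b. qbinomial p (a + b) i * p ^ i * (z ^ i * p ^ tri (int i - int (Suc a))))"
    by (rule sum.distrib)
  also have "\<dots> = (\<Sum>i\<le>Suc a + b. qbinomial p (Suc a + b) i * z ^ i * p ^ tri (int i - int (Suc a)))"
    using sum_qbinomial_Suc[of p "a + b" "\<lambda>i. z ^ i * p ^ tri (int i - int (Suc a))"]
    by (simp add: mult.assoc)
  finally show ?case .
qed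

lemma qbinomial_qpoch:
  "k \<le> n \<Longrightarrow> qbinomial p n k * qpoch p k * qpoch p (n - k) = qpoch p n"
proof (induction n arbitrary: k)
  case 0 then show ?case by (simp add: qpoch_def)
next
  case (Suc n)
  show ?case
  proof (cases k)
    case 0 then show ?thesis by (simp add: qpoch_def)
  next
    case (Suc j)
    have j: "j \<le> n" using Suc.prems Suc by simp
    have A: "qbinomial p n j * qpoch p (Suc j) * qpoch p (n - j) = qpoch p n * (1 - p ^ Suc j)"
      by (simp only: qpoch_Suc Suc.IH[OF j, symmetric] mult_ac)
    have B: "p ^ Suc j * qbinomial p n (Suc j) * qpoch p (Suc j) * qpoch p (n - j) =
        p ^ Suc j * (1 - p ^ (n - j)) * qpoch p n"
    proof (cases "Suc j \<le> n")
      case True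
      then have "qpoch p (n - j) = qpoch p (n - Suc j) * (1 - p ^ (n - j))"
        by (metis Suc_diff_Suc Suc_le_lessD qpoch_Suc)
      then show ?thesis by (simp only: Suc.IH[OF True, symmetric] mult_ac)
    next
      case False
      then show ?thesis using j by (simp add: qbinomial_eq_0)
    qed
    have "qbinomial p (Suc n) k * qpoch p k * qpoch p (Suc n - k) =
        qbinomial p n j * qpoch p (Suc j) * qpoch p (n - j)
        + p ^ Suc j * qbinomial p n (Suc j) * qpoch p (Suc j) * qpoch p (n - j)"
      using Suc by (simp add: algebra_simps del: power_Suc)
    also have "\<dots> = qpoch p n * (1 - p ^ Suc n)"
      unfolding A B using j by (simp add: algebra_simps power_add[symmetric] del: power_Suc)
    finally show ?thesis by (simp add: qpoch_Suc)
  qed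
qed

lemma fk_qbinomial_eq_below:
  assumes d: "0 < d" and "i \<le> n"
  shows "fps_eq_below (Suc (min i (n - i))) (fk d * qbinomial (fps_X ^ d) n i) 1"
proof -
  define x :: "rat fps" where "x = fps_X ^ d"
  define a where "a = min i (n - i)"
  define b where "b = max i (n - i)"
  have "a \<le> b" "a \<le> n" by (auto simp: a_def b_def)
  have qpoch_approx: "fps_eq_below (Suc a) (qpoch x m) (fk d)" if "a \<le> m" for m
    using fps_eq_below_mono[OF fk_eq_below_qpoch[OF d, of m]] that
    by (simp add: x_def fps_eq_below_sym)
  have "qbinomial x n i * qpoch x a * qpoch x b = qpoch x n"
    using qbinomial_qpoch[OF \<open>i \<le> n\<close>, of x]
    by (cases "i \<le> n - i") (simp_all add: a_def b_def min_def max_def mult_ac)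
  then have "fps_eq_below (Suc a) (qbinomial x n i * qpoch x a * fk d) (fk d)"
    using fps_eq_below_mult[OF fps_eq_below_refl qpoch_approx[OF \<open>a \<le> b\<close>]]
      qpoch_approx[OF \<open>a \<le> n\<close>]
    by (metis fps_eq_below_trans fps_eq_below_sym)
  then have "fps_eq_below (Suc a) (fk d * (qbinomial x n i * qpoch x a)) (fk d * 1)"
    by (simp add: mult_ac)
  then have "fps_eq_below (Suc a) (qbinomial x n i * qpoch x a) 1"
    by (rule fps_eq_below_cancel_unit[rotated]) simp
  then have "fps_eq_below (Suc a) (qbinomial x n i * fk d) 1"
    using fps_eq_below_mult[OF fps_eq_below_refl qpoch_approx[OF order_refl]]
    by (metis fps_eq_below_trans fps_eq_below_sym)
  then show ?thesis by (simp add: a_def x_def mult.commute)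
qed

lemma fk_qbinomial_X_power_nth:
  assumes "0 < d" "i \<le> n" "N < e + Suc (min i (n - i))"
  shows "(fk d * qbinomial (fps_X ^ d) n i * fps_X ^ e) $ N = of_bool (e = N)"
proof (cases "N < e")
  case False
  then have "(fk d * qbinomial (fps_X ^ d) n i) $ (N - e) = (1 :: rat fps) $ (N - e)"
    using fk_qbinomial_eq_below[OF assms(1,2)] assms(3) by (simp add: fps_eq_below_def)
  then show ?thesis
    using False by (simp add: fps_X_power_mult_right_nth)
qed (simp add: fps_X_power_mult_right_nth)

section \<open>Theta series as infinite products\<close>

definition int_theta :: "(int \<Rightarrow> nat) \<Rightarrow> rat fps" where
  "int_theta e = Abs_fps (\<lambda>n. of_nat (card {j. e j = n}))"

text \<open>\<open>theta_sq\<close> is \<open>\<phi>(q)\<close>, while \<open>theta_tri\<close> is \<open>2\<psi>(q)\<close> rather than \<open>\<psi>(q)\<close>,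
  because \<open>tri j = tri (-1 - j)\<close>.\<close>
abbreviation theta_sq :: "rat fps" where
  "theta_sq \<equiv> int_theta (\<lambda>j. nat (j ^ 2))"

abbreviation theta_tri :: "rat fps" where
  "theta_tri \<equiv> int_theta tri"

lemma card_centered_window:
  assumes "\<And>j. P j \<Longrightarrow> \<bar>j\<bar> \<le> int n"
  shows "card {i\<in>{..2 * n}. P (int i - int n)} = card {j. P j}"
proof (rule bij_betw_same_card)
  show "bij_betw (\<lambda>i. int i - int n) {i\<in>{..2 * n}. P (int i - int n)} {j. P j}"
  proof (rule bij_betw_byWitness[where f' = "\<lambda>j. nat (j + int n)"])
    show "(\<lambda>j. nat (j + int n)) ` {j. P j} \<subseteq> {i\<in>{..2 * n}. P (int i - int n)}"
      using assms by force
  qed (use assms in force)+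
qed

text \<open>Since \<open>fk d * qbinomial (q\<^sup>d) (2n) i\<close> is \<open>1\<close> up to order \<open>min i (2n - i)\<close>,
  multiplying the finite triple product by \<open>fk d\<close> and letting \<open>n\<close> grow yields the theta series.\<close>
lemma fk_mult_eq_int_theta:
  fixes L :: "nat \<Rightarrow> rat fps" and e :: "int \<Rightarrow> nat"
  assumes d: "0 < d"
    and approx: "\<And>n. fps_eq_below n P (L n)"
    and L: "\<And>n. n \<ge> 1 \<Longrightarrow>
      L n = (\<Sum>i\<le>2 * n. qbinomial (fps_X ^ d) (2 * n) i * fps_X ^ e (int i - int n))"
    and growth: "\<And>j. \<bar>j\<bar> \<le> int (e j) + int K"
  shows "fk d * P = int_theta e"
proof (rule fps_ext)
  fix N
  define n where "n = N + K + 1"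
  then have "1 \<le> n" by simp
  have "(fk d * P) $ N = (fk d * L n) $ N"
    using fps_eq_below_mult[OF fps_eq_below_refl approx[of n]] by (simp add: fps_eq_below_def n_def)
  also have "\<dots> = (\<Sum>i\<le>2 * n. (fk d * qbinomial (fps_X ^ d) (2 * n) i * fps_X ^ e (int i - int n)) $ N)"
    using L[OF \<open>1 \<le> n\<close>] by (simp add: sum_distrib_left fps_sum_nth mult.assoc)
  also have "\<dots> = (\<Sum>i\<le>2 * n. of_bool (e (int i - int n) = N))"
  proof (rule sum.cong)
    fix i assume "i \<in> {..2 * n}"
    moreover have "\<bar>int i - int n\<bar> \<le> int (e (int i - int n)) + int K" by (rule growth)
    ultimately show "(fk d * qbinomial (fps_X ^ d) (2 * n) i * fps_X ^ e (int i - int n)) $ N =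
        of_bool (e (int i - int n) = N)"
      by (intro fk_qbinomial_X_power_nth d) (auto simp: n_def min_def abs_if split: if_splits)
  qed simp
  also have "\<dots> = of_nat (card {i\<in>{..2 * n}. e (int i - int n) = N})"
    by (simp add: Int_def)
  also have "\<dots> = int_theta e $ N"
  proof -
    have "\<bar>j\<bar> \<le> int n" if "e j = N" for j
      using growth[of j] that by (simp add: n_def)
    then have "card {i\<in>{..2 * n}. e (int i - int n) = N} = card {j. e j = N}"
      by (rule card_centered_window)
    then show ?thesis by (simp add: int_theta_def)
  qed
  finally show "(fk d * P) $ N = int_theta e $ N" .
qed

lemma abs_le_tri_plus_1: "\<bar>j\<bar> \<le> int (tri j) + 1"
  using tri_times_2[of j] mult_succ_nonneg[of "j - 1"] mult_succ_nonneg[of "j + 1"]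
  by (simp add: algebra_simps abs_if)

lemma abs_le_square: "\<bar>j\<bar> \<le> (j :: int) ^ 2"
proof (cases "j = 0")
  case False
  then have "\<bar>j\<bar> * 1 \<le> \<bar>j\<bar> * \<bar>j\<bar>" by (intro mult_left_mono) simp_all
  then show ?thesis by (simp add: power2_eq_square abs_mult[symmetric])
qed simp

lemma int_theta_shift: "int_theta (\<lambda>j. e (j + c)) = int_theta e"
proof -
  have "bij_betw (\<lambda>j. j + c) {j. e (j + c) = n} {j. e j = n}" for n
    by (rule bij_betw_byWitness[where f' = "\<lambda>j. j - c"]) auto
  then have "card {j. e (j + c) = n} = card {j. e j = n}" for n
    by (rule bij_betw_same_card)
  then show ?thesis by (simp add: int_theta_def)
qed

definition plus_prod :: "rat fps" where
  "plus_prod = fps_prod_inf (\<lambda>m. 1 + fps_X ^ m)"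

definition odd_plus_prod :: "rat fps" where
  "odd_plus_prod = fps_prod_inf (\<lambda>m. 1 + fps_X ^ (2 * m - 1))"

lemma plus_prod_eq_below: "fps_eq_below (Suc M) plus_prod (\<Prod>m\<in>{1..M}. 1 + fps_X ^ m)"
  unfolding plus_prod_def by (rule fps_prod_inf_eq_below) (simp add: fps_eq_below_def)

lemma odd_plus_prod_eq_below:
  "fps_eq_below (Suc M) odd_plus_prod (\<Prod>m\<in>{1..M}. 1 + fps_X ^ (2 * m - 1))"
  unfolding odd_plus_prod_def by (rule fps_prod_inf_eq_below) (auto simp: fps_eq_below_def)

lemma jacobi_theta_tri: "fk 1 * (2 * plus_prod ^ 2) = theta_tri"
proof -
  let ?E = "\<lambda>M. \<Prod>m\<in>{1..M}. 1 + fps_X ^ m :: rat fps"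
  have lt: "(\<Prod>s<Suc m. 1 + fps_X ^ s) = 2 * ?E m" for m
    by (induction m) (simp_all add: prod.nat_ivl_Suc')
  show ?thesis
  proof (rule fk_mult_eq_int_theta[where L = "\<lambda>n. (\<Prod>s<n. 1 + fps_X ^ s) * ?E n" and K = 1])
    show "fps_eq_below n (2 * plus_prod ^ 2) ((\<Prod>s<n. 1 + fps_X ^ s) * ?E n)" for n
    proof (cases n)
      case (Suc m)
      have "fps_eq_below (Suc m) (2 * plus_prod * plus_prod) (2 * ?E m * ?E (Suc m))"
        by (intro fps_eq_below_mult fps_eq_below_refl plus_prod_eq_below
            fps_eq_below_mono[OF plus_prod_eq_below]) simp
      then show ?thesis unfolding Suc lt power2_eq_square by (simp only: mult.assoc)
    qed (simp add: fps_eq_below_def)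
  next
    show "(\<Prod>s<n. 1 + fps_X ^ s) * ?E n =
        (\<Sum>i\<le>2 * n. qbinomial (fps_X ^ 1) (2 * n) i * fps_X ^ tri (int i - int n))" for n
      using finite_jacobi_triple_product[where a = n and b = n and z = 1 and p = "fps_X :: rat fps"]
      by (simp add: mult_2)
  next
    show "\<bar>j\<bar> \<le> int (tri j) + int 1" for j
      using abs_le_tri_plus_1[of j] by simp
  qed simp
qed

lemma prod_X_plus_X_square_power:
  "(\<Prod>s<Suc m. fps_X + (fps_X ^ 2) ^ s :: 'a::comm_ring_1 fps) =
     fps_X ^ m * ((1 + fps_X) * (\<Prod>k\<in>{1..m}. 1 + fps_X ^ (2 * k - 1)))"
proof (induction m)
  case (Suc m)
  have "Suc (2 * Suc m - 1) = 2 * Suc m" by simp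
  then have "(fps_X ^ 2) ^ Suc m = fps_X * (fps_X ^ (2 * Suc m - 1) :: 'a fps)"
    by (metis power_mult power_Suc)
  then have "fps_X + (fps_X ^ 2) ^ Suc m = fps_X * (1 + fps_X ^ (2 * Suc m - 1) :: 'a fps)"
    by (simp only: distrib_left mult_1_right)
  then show ?case
    unfolding prod.lessThan_Suc[of _ "Suc m"] Suc.IH prod_atLeast1_Suc
    by (simp only: power_Suc mult_ac)
qed simp

lemma one_plus_X_mult_prod:
  "(1 + fps_X) * (\<Prod>k\<in>{1..b}. 1 + fps_X * (fps_X ^ 2) ^ k :: 'a::comm_ring_1 fps) =
     (\<Prod>k\<in>{1..Suc b}. 1 + fps_X ^ (2 * k - 1))"
proof (induction b)
  case (Suc b)
  have "Suc (2 * Suc b) = 2 * Suc (Suc b) - 1" by simp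
  then have exponent: "fps_X * (fps_X ^ 2) ^ Suc b = (fps_X ^ (2 * Suc (Suc b) - 1) :: 'a fps)"
    by (metis power_mult power_Suc)
  have "(1 + fps_X) * (\<Prod>k\<in>{1..Suc b}. 1 + fps_X * (fps_X ^ 2) ^ k :: 'a fps) =
      ((1 + fps_X) * (\<Prod>k\<in>{1..b}. 1 + fps_X * (fps_X ^ 2) ^ k)) * (1 + fps_X * (fps_X ^ 2) ^ Suc b)"
    by (simp only: prod_atLeast1_Suc mult.assoc)
  also have "\<dots> = (\<Prod>k\<in>{1..Suc b}. 1 + fps_X ^ (2 * k - 1)) * (1 + fps_X ^ (2 * Suc (Suc b) - 1))"
    by (simp only: Suc.IH exponent)
  also have "\<dots> = (\<Prod>k\<in>{1..Suc (Suc b)}. 1 + fps_X ^ (2 * k - 1))"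
    by (simp only: prod_atLeast1_Suc[of _ "Suc b"])
  finally show ?case .
qed simp

lemma tri_square_exponent:
  "i + 2 * tri (int i - int (Suc m)) = m + nat ((int i - int (Suc m) + 1) ^ 2)"
proof -
  define j where "j = int i - int (Suc m)"
  have "int i = int m + 1 + j" by (simp add: j_def)
  then have "int (i + 2 * tri j) = int (m + nat ((j + 1) ^ 2))"
    using tri_times_2[of j] zero_le_square[of "j + 1"] by (simp add: power2_eq_square algebra_simps)
  then show ?thesis by (simp only: of_nat_eq_iff j_def)
qed

lemma prod_odd_finite_jacobi:
  fixes m :: nat
  defines "n \<equiv> Suc m"
  shows "(\<Prod>k\<in>{1..m}. 1 + fps_X ^ (2 * k - 1)) * (\<Prod>k\<in>{1..n + 1}. 1 + fps_X ^ (2 * k - 1)) =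
    (\<Sum>i\<le>2 * n. qbinomial (fps_X ^ 2) (2 * n) i * fps_X ^ nat ((int i - int n + 1) ^ 2) :: rat fps)"
proof -
  let ?O = "\<lambda>M. \<Prod>k\<in>{1..M}. 1 + fps_X ^ (2 * k - 1) :: rat fps"
  have "fps_X ^ m * (?O m * ?O (n + 1)) =
      fps_X ^ m * (?O m * ((1 + fps_X) * (\<Prod>k\<in>{1..n}. 1 + fps_X * (fps_X ^ 2) ^ k)))"
    by (simp only: n_def one_plus_X_mult_prod Suc_eq_plus1[symmetric])
  also have "\<dots> = (\<Prod>s<n. fps_X + (fps_X ^ 2) ^ s) * (\<Prod>k\<in>{1..n}. 1 + fps_X * (fps_X ^ 2) ^ k)"
    unfolding n_def prod_X_plus_X_square_power by (simp only: mult_ac)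
  also have "\<dots> = (\<Sum>i\<le>2 * n. qbinomial (fps_X ^ 2) (2 * n) i * fps_X ^ i * (fps_X ^ 2) ^ tri (int i - int n))"
    using finite_jacobi_triple_product[where a = n and b = n and z = fps_X and p = "fps_X ^ 2"]
    by (simp add: mult_2)
  also have "\<dots> = fps_X ^ m *
      (\<Sum>i\<le>2 * n. qbinomial (fps_X ^ 2) (2 * n) i * fps_X ^ nat ((int i - int n + 1) ^ 2))"
    unfolding sum_distrib_left
  proof (rule sum.cong)
    fix i
    have exponent: "fps_X ^ i * (fps_X ^ 2) ^ tri (int i - int n) =
        (fps_X ^ m * fps_X ^ nat ((int i - int n + 1) ^ 2) :: rat fps)"
      by (simp only: power_mult[symmetric] power_add[symmetric] n_def tri_square_exponent)
    have "qbinomial (fps_X ^ 2) (2 * n) i * fps_X ^ i * (fps_X ^ 2) ^ tri (int i - int n) =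
        qbinomial (fps_X ^ 2) (2 * n) i * (fps_X ^ m * fps_X ^ nat ((int i - int n + 1) ^ 2) :: rat fps)"
      by (simp only: mult.assoc exponent)
    also have "\<dots> = fps_X ^ m * (qbinomial (fps_X ^ 2) (2 * n) i * fps_X ^ nat ((int i - int n + 1) ^ 2))"
      by (rule mult.left_commute)
    finally show "qbinomial (fps_X ^ 2) (2 * n) i * fps_X ^ i * (fps_X ^ 2) ^ tri (int i - int n) =
        fps_X ^ m * (qbinomial (fps_X ^ 2) (2 * n) i * fps_X ^ nat ((int i - int n + 1) ^ 2) :: rat fps)" .
  qed simp
  finally show ?thesis by simp
qed

lemma jacobi_theta_sq: "fk 2 * odd_plus_prod ^ 2 = theta_sq"
proof -
  let ?O = "\<lambda>M. \<Prod>k\<in>{1..M}. 1 + fps_X ^ (2 * k - 1) :: rat fps"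
  have "fk 2 * odd_plus_prod ^ 2 = int_theta (\<lambda>j. nat ((j + 1) ^ 2))"
  proof (rule fk_mult_eq_int_theta[where L = "\<lambda>n. ?O (n - 1) * ?O (n + 1)" and K = 1])
    show "fps_eq_below n (odd_plus_prod ^ 2) (?O (n - 1) * ?O (n + 1))" for n
    proof (cases n)
      case (Suc m)
      have "fps_eq_below (Suc m) (odd_plus_prod * odd_plus_prod) (?O m * ?O (Suc (Suc m)))"
        by (intro fps_eq_below_mult odd_plus_prod_eq_below
            fps_eq_below_mono[OF odd_plus_prod_eq_below]) simp
      then show ?thesis by (simp add: Suc power2_eq_square)
    qed (simp add: fps_eq_below_def)
  next
    show "?O (n - 1) * ?O (n + 1) =
        (\<Sum>i\<le>2 * n. qbinomial (fps_X ^ 2) (2 * n) i * fps_X ^ nat ((int i - int n + 1) ^ 2))"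
      if "1 \<le> n" for n
      using that prod_odd_finite_jacobi[of "n - 1"] by simp
  next
    show "\<bar>j\<bar> \<le> int (nat ((j + 1) ^ 2)) + int 1" for j
      using abs_le_square[of "j + 1"] by simp
  qed simp
  also have "\<dots> = theta_sq"
    by (rule int_theta_shift)
  finally show ?thesis .
qed

lemma fk_1_mult_plus_prod: "fk 1 * plus_prod = fk 2"
proof -
  have "fk 1 * plus_prod = fps_prod_inf (\<lambda>m. (1 - fps_X ^ m) * (1 + fps_X ^ m))"
    unfolding fk_conv_fps_prod_inf plus_prod_def
    by (subst fps_prod_inf_mult)
      (auto intro: fps_eq_below_1_minus_X_power fps_eq_below_1_plus_X_power)
  also have "\<dots> = fk 2"
    unfolding fk_conv_fps_prod_inf
    by (rule fps_prod_inf_cong) (simp add: algebra_simps power_mult power2_eq_square)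
  finally show ?thesis .
qed

lemma odd_plus_prod_mult_dilate: "odd_plus_prod * fps_dilate 2 plus_prod = plus_prod"
proof -
  have "fps_dilate 2 plus_prod = fps_prod_inf (\<lambda>m. 1 + fps_X ^ (2 * m))"
    unfolding plus_prod_def
    by (subst fps_prod_inf_dilate)
      (auto intro: fps_eq_below_1_plus_X_power
            simp: fps_dilate_add fps_dilate_power fps_dilate_X power_mult)
  then have "odd_plus_prod * fps_dilate 2 plus_prod =
      fps_prod_inf (\<lambda>m. (1 + fps_X ^ (2 * m - 1)) * (1 + fps_X ^ (2 * m)))"
    unfolding odd_plus_prod_def
    by (simp, subst fps_prod_inf_mult) (auto intro: fps_eq_below_1_plus_X_power)
  also have "\<dots> = plus_prod"
    unfolding plus_prod_def
    by (rule fps_prod_inf_pairs[where F = "\<lambda>k. 1 + fps_X ^ k"])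
      (rule fps_eq_below_1_plus_X_power, simp)
  finally show ?thesis .
qed

lemma fps_neg_var_fk_1: "fps_neg_var (fk 1) = odd_plus_prod * fk 2"
proof -
  have below: "fps_eq_below m ((1 - fps_X ^ (2 * m - 1)) * (1 - fps_X ^ (2 * m))) (1 :: rat fps)" for m
    by (intro fps_eq_below_mult_1 fps_eq_below_1_minus_X_power) arith+
  have "fk 1 = fps_prod_inf (\<lambda>m. 1 - fps_X ^ m)"
    by (simp add: fk_conv_fps_prod_inf)
  also have "\<dots> = fps_prod_inf (\<lambda>m. (1 - fps_X ^ (2 * m - 1)) * (1 - fps_X ^ (2 * m)))"
    by (rule fps_prod_inf_pairs[symmetric]) (rule fps_eq_below_1_minus_X_power, simp)
  finally have "fps_neg_var (fk 1) =
      fps_prod_inf (\<lambda>m. fps_neg_var ((1 - fps_X ^ (2 * m - 1)) * (1 - fps_X ^ (2 * m))))"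
    using fps_prod_inf_neg_var[OF below] by simp
  also have "\<dots> = fps_prod_inf (\<lambda>m. (1 + fps_X ^ (2 * m - 1)) * (1 - fps_X ^ (m * 2)))"
  proof (rule fps_prod_inf_cong)
    fix m :: nat
    assume "1 \<le> m"
    then have "odd (2 * m - 1)" by presburger
    then show "fps_neg_var ((1 - fps_X ^ (2 * m - 1)) * (1 - fps_X ^ (2 * m))) =
        (1 + fps_X ^ (2 * m - 1)) * (1 - fps_X ^ (m * 2) :: rat fps)"
      by (simp add: fps_neg_var_mult fps_neg_var_diff fps_neg_var_power mult.commute)
  qed
  also have "\<dots> = odd_plus_prod * fk 2"
    unfolding odd_plus_prod_def fk_conv_fps_prod_inf
    by (rule fps_prod_inf_mult[symmetric])
      (auto intro: fps_eq_below_1_minus_X_power fps_eq_below_1_plus_X_power)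
  finally show ?thesis .
qed

lemma fps_neg_var_fk_2: "fps_neg_var (fk 2) = fk 2"
  using fps_neg_var_dilate_even[of 2 "fk 1"] fps_dilate_fk[of 2 1] by simp

lemma odd_plus_prod_fk: "odd_plus_prod * fk 1 * fk 4 = fk 2 ^ 2"
proof -
  have dilated: "fk 2 * fps_dilate 2 plus_prod = fk 4"
    using arg_cong[OF fk_1_mult_plus_prod, of "fps_dilate 2"]
    by (simp add: fps_dilate_mult fps_dilate_fk)
  have "odd_plus_prod * fk 1 * fk 4 = fk 2 * (fk 1 * (odd_plus_prod * fps_dilate 2 plus_prod))"
    by (simp only: dilated[symmetric] mult_ac)
  also have "\<dots> = fk 2 ^ 2"
    by (simp only: odd_plus_prod_mult_dilate fk_1_mult_plus_prod power2_eq_square)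
  finally show ?thesis .
qed

lemma theta_sq_fk: "theta_sq * (fk 1 * fk 4) ^ 2 = fk 2 ^ 5"
proof -
  have "theta_sq * (fk 1 * fk 4) ^ 2 = fk 2 * (odd_plus_prod * fk 1 * fk 4) ^ 2"
    unfolding jacobi_theta_sq[symmetric] by algebra
  then show ?thesis unfolding odd_plus_prod_fk by algebra
qed

lemma theta_tri_fk: "theta_tri * fk 1 = 2 * fk 2 ^ 2"
proof -
  have "theta_tri * fk 1 = 2 * (fk 1 * plus_prod) ^ 2"
    unfolding jacobi_theta_tri[symmetric] by algebra
  then show ?thesis unfolding fk_1_mult_plus_prod .
qed

lemma fps_neg_var_theta_sq_fk: "fps_neg_var theta_sq * fk 2 = fk 1 ^ 2"
proof -
  have "fk 1 = fps_neg_var odd_plus_prod * fk 2"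
    using arg_cong[OF fps_neg_var_fk_1, of fps_neg_var] by (simp add: fps_neg_var_mult fps_neg_var_fk_2)
  moreover have "fps_neg_var theta_sq = fk 2 * fps_neg_var odd_plus_prod ^ 2"
    unfolding jacobi_theta_sq[symmetric] by (simp add: fps_neg_var_mult fps_neg_var_power fps_neg_var_fk_2)
  ultimately show ?thesis by algebra
qed

section \<open>Dissection of the generating function\<close>

lemma finite_square_roots: "finite {j::int. nat (j ^ 2) = n}"
proof (rule finite_subset)
  show "{j::int. nat (j ^ 2) = n} \<subseteq> {- int n..int n}"
  proof
    fix j assume "j \<in> {j::int. nat (j ^ 2) = n}"
    then show "j \<in> {- int n..int n}" using abs_le_square[of j] by auto
  qed
qed simp

lemma card_even_square_roots:
  "card {j::int. nat (j ^ 2) = n \<and> even j} =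
     (if 4 dvd n then card {i::int. nat (i ^ 2) = n div 4} else 0)"
proof -
  have "{j::int. nat (j ^ 2) = n \<and> even j} = (\<lambda>i. 2 * i) ` {i. 4 * nat (i ^ 2) = n}"
    by (auto simp: power_mult_distrib nat_mult_distrib elim!: evenE)
  moreover have "{i::int. 4 * nat (i ^ 2) = n} =
      (if 4 dvd n then {i. nat (i ^ 2) = n div 4} else {})"
    by auto
  ultimately show ?thesis by (simp add: card_image inj_on_def)
qed

lemma odd_square: "(2 * t + 1) ^ 2 = 8 * int (tri t) + (1::int)"
  using tri_times_2[of t] by (simp add: power2_eq_square algebra_simps)

lemma card_odd_square_roots:
  "card {j::int. nat (j ^ 2) = n \<and> odd j} =
     (if 1 \<le> n \<and> 8 dvd (n - 1) then card {t. tri t = (n - 1) div 8} else 0)"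
proof -
  have "{j::int. nat (j ^ 2) = n \<and> odd j} = (\<lambda>t. 2 * t + 1) ` {t. 8 * tri t + 1 = n}"
  proof (rule set_eqI)
    fix j :: int
    have "nat ((2 * t + 1) ^ 2) = 8 * tri t + 1" for t
      using odd_square[of t] by simp
    then show "j \<in> {j. nat (j ^ 2) = n \<and> odd j} \<longleftrightarrow> j \<in> (\<lambda>t. 2 * t + 1) ` {t. 8 * tri t + 1 = n}"
      by (auto elim!: oddE)
  qed
  moreover have "{t. 8 * tri t + 1 = n} =
      (if 1 \<le> n \<and> 8 dvd (n - 1) then {t. tri t = (n - 1) div 8} else {})"
    by auto
  ultimately show ?thesis by (simp add: card_image inj_on_def)
qed

lemma theta_sq_dissection: "theta_sq = fps_dilate 4 theta_sq + fps_X * fps_dilate 8 theta_tri"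
proof (rule fps_ext)
  fix n
  have "card {j::int. nat (j ^ 2) = n} =
      card {j::int. nat (j ^ 2) = n \<and> even j} + card {j::int. nat (j ^ 2) = n \<and> odd j}"
    using finite_square_roots[of n] by (subst card_Un_disjoint[symmetric]) (auto intro: arg_cong[where f = card])
  then show "theta_sq $ n = (fps_dilate 4 theta_sq + fps_X * fps_dilate 8 theta_tri) $ n"
    by (cases n) (simp_all add: int_theta_def fps_dilate_nth card_even_square_roots card_odd_square_roots)
qed

lemma theta_sq_even_odd:
  "theta_sq = fps_dilate 2 (fps_dilate 2 theta_sq) + fps_X * fps_dilate 2 (fps_dilate 4 theta_tri)"
  by (subst theta_sq_dissection) (simp add: fps_dilate_dilate)

text \<open>The classical \<open>\<phi>(q)\<phi>(-q) = \<phi>(-q\<^sup>2)\<^sup>2\<close>, read off the product formulas.\<close>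
lemma theta_sq_mult_neg_var: "theta_sq * fps_neg_var theta_sq = fps_dilate 2 (fps_neg_var theta_sq ^ 2)"
proof -
  have "fps_dilate 2 (fps_neg_var theta_sq) * fk 4 = fk 2 ^ 2"
    using arg_cong[OF fps_neg_var_theta_sq_fk, of "fps_dilate 2"]
    by (simp add: fps_dilate_mult fps_dilate_power fps_dilate_fk)
  then have "theta_sq * fps_neg_var theta_sq * (fk 1 ^ 2 * fk 2 * fk 4 ^ 2) =
      fps_dilate 2 (fps_neg_var theta_sq ^ 2) * (fk 1 ^ 2 * fk 2 * fk 4 ^ 2)"
    unfolding fps_dilate_power[OF pos2]
    using theta_sq_fk fps_neg_var_theta_sq_fk by algebra
  then show ?thesis by simp
qed

text \<open>Comparing the last identity with the dissection of \<open>\<phi>(q)\<close> gives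
  \<open>\<phi>(q\<^sup>2)\<^sup>2 - 4q\<psi>(q\<^sup>4)\<^sup>2 = \<phi>(-q)\<^sup>2\<close>; then substitute \<open>-q\<close> for \<open>q\<close>.\<close>
lemma theta_sq_square_dissection:
  "theta_sq ^ 2 = fps_dilate 2 theta_sq ^ 2 + fps_X * fps_dilate 4 theta_tri ^ 2"
proof -
  define A where "A = fps_dilate 2 theta_sq"
  define B where "B = fps_dilate 4 theta_tri"
  have theta_split: "theta_sq = fps_dilate 2 A + fps_X * fps_dilate 2 B"
    unfolding A_def B_def by (rule theta_sq_even_odd)
  have neg_theta_split: "fps_neg_var theta_sq = fps_dilate 2 A - fps_X * fps_dilate 2 B"
    by (subst theta_split) (simp add: fps_neg_var_add fps_neg_var_mult fps_neg_var_dilate_even)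
  have "fps_dilate 2 (A ^ 2 - fps_X * B ^ 2) =
      (fps_dilate 2 A + fps_X * fps_dilate 2 B) * (fps_dilate 2 A - fps_X * fps_dilate 2 B)"
    by (simp add: fps_dilate_diff fps_dilate_mult fps_dilate_power fps_dilate_X algebra_simps
        power2_eq_square)
  also have "\<dots> = fps_dilate 2 (fps_neg_var theta_sq ^ 2)"
    unfolding neg_theta_split[symmetric] theta_split[symmetric] by (rule theta_sq_mult_neg_var)
  finally have "A ^ 2 - fps_X * B ^ 2 = fps_neg_var theta_sq ^ 2"
    by (rule fps_dilate_inject[OF pos2])
  then have "fps_neg_var (A ^ 2 - fps_X * B ^ 2) = theta_sq ^ 2"
    by (simp add: fps_neg_var_power)
  then show ?thesis
    by (simp add: A_def B_def fps_neg_var_diff fps_neg_var_mult fps_neg_var_power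
        fps_neg_var_dilate_even)
qed

lemma btbar_gf_theta_sq: "btbar_gf * fk 2 ^ 18 = theta_sq ^ 3 * fk 4 ^ 9"
proof -
  have "btbar_gf * (fk 1 ^ 6 * fk 2 ^ 3) = fk 4 ^ 3"
    unfolding btbar_gf_def by (simp add: is_unit_mult_iff is_unit_power_iff)
  then have "btbar_gf * fk 2 ^ 18 * fk 1 ^ 6 = fk 4 ^ 3 * fk 2 ^ 15"
    by algebra
  also have "\<dots> = (theta_sq * (fk 1 * fk 4) ^ 2) ^ 3 * fk 4 ^ 3"
    unfolding theta_sq_fk by algebra
  also have "\<dots> = theta_sq ^ 3 * fk 4 ^ 9 * fk 1 ^ 6"
    by algebra
  finally show ?thesis by simp
qed

lemma even_part_btbar_gf:
  "fps_even_part btbar_gf * fk 1 ^ 18 =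
     fk 2 ^ 9 * (fps_dilate 2 theta_sq ^ 3 + 3 * fps_X * fps_dilate 2 theta_sq * fps_dilate 4 theta_tri ^ 2)"
proof -
  define A where "A = fps_dilate 2 theta_sq"
  define B where "B = fps_dilate 4 theta_tri"
  have "theta_sq ^ 3 = fps_dilate 2 (A ^ 3 + 3 * fps_X * A * B ^ 2)
      + fps_X * fps_dilate 2 (3 * A ^ 2 * B + fps_X * B ^ 3)"
    unfolding A_def B_def
    by (subst theta_sq_even_odd)
      (simp add: fps_dilate_add fps_dilate_mult fps_dilate_power fps_dilate_X algebra_simps
        power2_eq_square power3_eq_cube)
  then have even_cube: "fps_even_part (theta_sq ^ 3) = A ^ 3 + 3 * fps_X * A * B ^ 2"
    by (simp add: fps_even_part_decomp)
  have "fps_dilate 2 (fk 1 ^ 18) * btbar_gf = fps_dilate 2 (fk 2 ^ 9) * theta_sq ^ 3"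
    using btbar_gf_theta_sq by (simp add: fps_dilate_power fps_dilate_fk mult.commute)
  then have "fk 1 ^ 18 * fps_even_part btbar_gf = fk 2 ^ 9 * fps_even_part (theta_sq ^ 3)"
    by (metis fps_even_part_dilate_mult)
  then show ?thesis unfolding even_cube A_def B_def by (simp add: mult.commute)
qed

lemma fps_dilate_theta_sq_fk: "fps_dilate 2 theta_sq * (fk 2 * fk 8) ^ 2 = fk 4 ^ 5"
  using arg_cong[OF theta_sq_fk, of "fps_dilate 2"]
  by (simp add: fps_dilate_mult fps_dilate_power fps_dilate_fk)

lemma fps_dilate_theta_tri_fk: "fps_dilate 4 theta_tri * fk 4 = 2 * fk 8 ^ 2"
  using arg_cong[OF theta_tri_fk, of "fps_dilate 4"]
  by (simp add: fps_dilate_mult fps_dilate_power fps_dilate_fk)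

lemma even_part_btbar_gf_fk:
  "fps_even_part btbar_gf * (fk 1 ^ 22 * fk 8 ^ 2) =
     8 * fps_X * (fk 2 ^ 7 * fk 4 ^ 3 * fk 8 ^ 2) * (fk 1 ^ 4 * fk 8 ^ 2) + fk 2 ^ 17 * fk 4"
proof -
  have "fps_even_part btbar_gf * (fk 1 ^ 22 * fk 8 ^ 2) * (fk 2 ^ 2 * fk 4 ^ 4) =
      (8 * fps_X * (fk 2 ^ 7 * fk 4 ^ 3 * fk 8 ^ 2) * (fk 1 ^ 4 * fk 8 ^ 2) + fk 2 ^ 17 * fk 4)
        * (fk 2 ^ 2 * fk 4 ^ 4)"
    using even_part_btbar_gf theta_sq_square_dissection theta_sq_fk
      fps_dilate_theta_sq_fk fps_dilate_theta_tri_fk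
    by algebra
  then show ?thesis by simp
qed

theorem mainTheorem5:
  shows "Abs_fps (\<lambda>n. btbar (2 * n)) =
     8 * fps_X * (fk 2 ^ 7 * fk 4 ^ 3 * fk 8 ^ 2) / fk 1 ^ 18
     + (fk 2 ^ 17 * fk 4) / (fk 1 ^ 22 * fk 8 ^ 2)"
proof -
  let ?N = "8 * fps_X * (fk 2 ^ 7 * fk 4 ^ 3 * fk 8 ^ 2)"
  let ?k = "fk 1 ^ 4 * fk 8 ^ 2"
  have unit: "is_unit (fk 1 ^ 22 * fk 8 ^ 2)"
    by (simp add: is_unit_mult_iff is_unit_power_iff)
  have "Abs_fps (\<lambda>n. btbar (2 * n)) = fps_even_part btbar_gf"
    by (simp add: btbar_def fps_even_part_def)
  also have "\<dots> = (?N * ?k + fk 2 ^ 17 * fk 4) div (fk 1 ^ 22 * fk 8 ^ 2)"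
    by (subst unit_eq_div2[OF unit]) (rule even_part_btbar_gf_fk)
  also have "\<dots> = ?N * ?k div (fk 1 ^ 18 * ?k) + (fk 2 ^ 17 * fk 4) / (fk 1 ^ 22 * fk 8 ^ 2)"
    using unit by (simp add: unit_imp_dvd power_add[symmetric] mult_ac)
  also have "?N * ?k div (fk 1 ^ 18 * ?k) = ?N / fk 1 ^ 18"
    by (rule div_mult_mult2) simp
  finally show ?thesis .
qed

end
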